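(* Let $\mathcal{A}$ be a finite totally ordered alphabet. The monoid $\mathbf{Ch}(\mathcal{A},2)$ is $\mathscr{J}$-trivial, i.e. for $x,y\in\mathbf{Ch}(\mathcal{A},2)$, if $\mathbf{Ch}(\mathcal{A},2)\,x\,\mathbf{Ch}(\mathcal{A},2)=\mathbf{Ch}(\mathcal{A},2)\,y\,\mathbf{Ch}(\mathcal{A},2)$ then $x=y$.
   Context: The Chinese monoid $\mathbf{Ch}(\mathcal{A})$ is the quotient of the free monoid $\mathcal{A}^*$ by the relations $cba=cab=bca$ for $a<b<c$, and $aba=baa$, $bba=bab$ for $a<b$ ($a,b,c\in\mathcal{A}$). $\mathbf{Ch}(\mathcal{A},2)$ is the quotient of $\mathbf{Ch}(\mathcal{A})$ obtained by adding the relations $a^2=a$ for every $a\in\mathcal{A}$. *)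

theory Defs
  imports Main
begin

inductive chrel2 :: "'a::linorder list \<Rightarrow> 'a list \<Rightarrow> bool" where
  r1: "a < b \<Longrightarrow> b < c \<Longrightarrow> chrel2 [c,b,a] [c,a,b]"
| r2: "a < b \<Longrightarrow> b < c \<Longrightarrow> chrel2 [c,a,b] [b,c,a]"
| r3: "a < b \<Longrightarrow> chrel2 [a,b,a] [b,a,a]"
| r4: "a < b \<Longrightarrow> chrel2 [b,b,a] [b,a,b]"
| r5: "chrel2 [a,a] [a]"

inductive ch2_eq :: "'a::linorder list \<Rightarrow> 'a list \<Rightarrow> bool" where
  step: "chrel2 l r \<Longrightarrow> ch2_eq (u @ l @ v) (u @ r @ v)"
| refl: "ch2_eq w w"
| sym: "ch2_eq w w' \<Longrightarrow> ch2_eq w' w"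
| trans: "ch2_eq w1 w2 \<Longrightarrow> ch2_eq w2 w3 \<Longrightarrow> ch2_eq w1 w3"

text \<open>Elements of Ch(A,2) are represented by words; two words represent the same
  element iff they are ch2_eq. The two-sided ideal M x M equals M y M iff
  x \<in> M y M and y \<in> M x M.\<close>

definition ch2_J_equiv :: "'a::linorder list \<Rightarrow> 'a list \<Rightarrow> bool" where
  "ch2_J_equiv x y \<longleftrightarrow>
     (\<exists>u v. ch2_eq x (u @ y @ v)) \<and> (\<exists>u v. ch2_eq y (u @ x @ v))"

end

theory Submission
  imports Defs
begin

text \<open>If \<open>x \<approx> u y v\<close> and \<open>y \<approx> u' x v'\<close>, then \<open>x \<approx> p x q\<close> with \<open>p = u u'\<close>, \<open>q = v' v\<close>,
  hence \<open>x \<approx> p\<^sup>n x q\<^sup>n\<close> for all \<open>n\<close>. In \<open>Ch(A,2)\<close> every high power \<open>w\<^sup>n\<close> equals the strictly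
  decreasing word listing the letters of \<open>w\<close>, and a strictly decreasing word absorbs, on
  either side, every word over its own letters. Hence \<open>x \<approx> d x e\<close> for the decreasing words
  \<open>d\<close>, \<open>e\<close> of \<open>p\<close>, \<open>q\<close>, and \<open>y \<approx> u' d x e v' \<approx> d x e \<approx> x\<close>.\<close>

declare ch2_eq.trans [trans]

lemma ch2_eq_context: "ch2_eq a b \<Longrightarrow> ch2_eq (u @ a @ v) (u @ b @ v)"
proof (induction arbitrary: u v rule: ch2_eq.induct)
  case (step l r u0 v0)
  show ?case using ch2_eq.step[OF step, of "u @ u0" "v0 @ v"] by simp
qed (blast intro: ch2_eq.intros)+

lemma ch2_eq_contextI: "ch2_eq a b \<Longrightarrow> s = u @ a @ v \<Longrightarrow> t = u @ b @ v \<Longrightarrow> ch2_eq s t"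
  using ch2_eq_context by blast

lemma chrel2_contextI: "chrel2 l r \<Longrightarrow> s = u @ l @ v \<Longrightarrow> t = u @ r @ v \<Longrightarrow> ch2_eq s t"
  using ch2_eq.step by blast

lemma ch2_eq_max_letter_moves_right:
  assumes "\<forall>c\<in>set w. c < m" and "w \<noteq> []"
  shows "\<exists>z c. c < m \<and> ch2_eq (m # w) (z @ [m, c])"
  using assms
proof (induction w rule: rev_induct)
  case Nil
  then show ?case by simp
next
  case (snoc a w)
  have am: "a < m" using snoc.prems by simp
  show ?case
  proof (cases "w = []")
    case True
    then show ?thesis using am by (auto intro!: exI[of _ "[]"] ch2_eq.refl)
  next
    case False
    then obtain z c where cm: "c < m" and IH: "ch2_eq (m # w) (z @ [m, c])"
      using snoc by auto
    have wa: "ch2_eq (m # w @ [a]) (z @ [m, c, a])"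
      by (rule ch2_eq_contextI[OF IH, where u = "[]" and v = "[a]"]) simp_all
    consider "a < c" | "c < a" | "c = a" by fastforce
    then show ?thesis
    proof cases
      case 1
      have "ch2_eq (z @ [m, c, a]) (z @ [m, a, c])"
        by (rule chrel2_contextI[OF chrel2.r1[OF 1 cm], where u = z and v = "[]"]) simp_all
      also have "ch2_eq \<dots> ((z @ [c]) @ [m, a])"
        by (rule chrel2_contextI[OF chrel2.r2[OF 1 cm], where u = z and v = "[]"]) simp_all
      finally show ?thesis using wa am by (blast intro: ch2_eq.trans)
    next
      case 2
      have "ch2_eq (z @ [m, c, a]) ((z @ [a]) @ [m, c])"
        by (rule chrel2_contextI[OF chrel2.r2[OF 2 am], where u = z and v = "[]"]) simp_all
      then show ?thesis using wa cm by (blast intro: ch2_eq.trans)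
    next
      case 3
      have "ch2_eq (z @ [m, c, a]) (z @ [m, c])"
        by (rule chrel2_contextI[OF chrel2.r5, where u = "z @ [m]" and v = "[]"]) (simp_all add: 3)
      then show ?thesis using wa cm by (blast intro: ch2_eq.trans)
    qed
  qed
qed

lemma ch2_eq_max_letter_absorbs_right:
  assumes "\<forall>c\<in>set w. c < m"
  shows "ch2_eq (m # w @ [m]) (m # w)"
proof (cases "w = []")
  case True
  then show ?thesis by (auto intro: chrel2_contextI[OF chrel2.r5, where u = "[]" and v = "[]"])
next
  case False
  obtain z c where cm: "c < m" and mw: "ch2_eq (m # w) (z @ [m, c])"
    using ch2_eq_max_letter_moves_right[OF assms False] by blast
  have "ch2_eq (m # w @ [m]) (z @ [m, c, m])"
    by (rule ch2_eq_contextI[OF mw, where u = "[]" and v = "[m]"]) simp_all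
  also have "ch2_eq \<dots> (z @ [m, m, c])"
    by (rule ch2_eq.sym, rule chrel2_contextI[OF chrel2.r4[OF cm], where u = z and v = "[]"]) simp_all
  also have "ch2_eq \<dots> (z @ [m, c])"
    by (rule chrel2_contextI[OF chrel2.r5, where u = z and v = "[c]"]) simp_all
  also have "ch2_eq \<dots> (m # w)"
    using mw by (rule ch2_eq.sym)
  finally show ?thesis .
qed

lemma ch2_eq_max_letter_erases_later_copies:
  assumes "\<forall>c\<in>set u. c \<le> m"
  shows "ch2_eq (m # u) (m # filter (\<lambda>c. c \<noteq> m) u)"
  using assms
proof (induction u rule: rev_induct)
  case Nil
  then show ?case by (simp add: ch2_eq.refl)
next
  case (snoc a u)
  have "ch2_eq (m # u) (m # filter (\<lambda>c. c \<noteq> m) u)"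
    using snoc by simp
  then have IH: "ch2_eq (m # u @ [a]) (m # filter (\<lambda>c. c \<noteq> m) u @ [a])"
    by (rule ch2_eq_contextI[where u = "[]" and v = "[a]"]) simp_all
  show ?case
  proof (cases "a = m")
    case True
    have "\<forall>c\<in>set (filter (\<lambda>c. c \<noteq> m) u). c < m"
      using snoc.prems by auto
    then have "ch2_eq (m # filter (\<lambda>c. c \<noteq> m) u @ [m]) (m # filter (\<lambda>c. c \<noteq> m) u)"
      by (rule ch2_eq_max_letter_absorbs_right)
    then show ?thesis
      using ch2_eq.trans[OF IH] True by simp
  qed (use IH in simp)
qed

lemma ch2_eq_decreasing_absorbs_letter_right:
  assumes "sorted_wrt (>) ds" and "a \<in> set ds"
  shows "ch2_eq (ds @ [a]) ds"
  using assms
proof (induction ds)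
  case (Cons m ds)
  show ?case
  proof (cases "a = m")
    case True
    then show ?thesis
      using Cons.prems ch2_eq_max_letter_absorbs_right[of ds m] by simp
  next
    case False
    then have "ch2_eq (ds @ [a]) ds"
      using Cons by simp
    then show ?thesis
      by (rule ch2_eq_contextI[where u = "[m]" and v = "[]"]) simp_all
  qed
qed simp

lemma ch2_eq_decreasing_absorbs_letter_left:
  assumes "sorted_wrt (>) ds" and "a \<in> set ds"
  shows "ch2_eq (a # ds) ds"
  using assms
proof (induction ds)
  case (Cons m ds)
  show ?case
  proof (cases "a = m")
    case True
    then show ?thesis
      by (intro chrel2_contextI[OF chrel2.r5, where u = "[]" and v = ds]) simp_all
  next
    case False
    then have am: "a < m" and left: "ch2_eq (a # ds) ds"
      using Cons by auto
    have "ch2_eq (a # m # ds) (a # m # a # ds)"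
      by (rule ch2_eq_contextI[OF ch2_eq.sym[OF left], where u = "[a, m]" and v = "[]"]) simp_all
    also have "ch2_eq \<dots> (m # a # a # ds)"
      by (rule chrel2_contextI[OF chrel2.r3[OF am], where u = "[]" and v = ds]) simp_all
    also have "ch2_eq \<dots> (m # a # ds)"
      by (rule chrel2_contextI[OF chrel2.r5, where u = "[m]" and v = ds]) simp_all
    also have "ch2_eq \<dots> (m # ds)"
      by (rule ch2_eq_contextI[OF left, where u = "[m]" and v = "[]"]) simp_all
    finally show ?thesis .
  qed
qed simp

lemma ch2_eq_decreasing_absorbs_left:
  assumes "sorted_wrt (>) ds" and "set u \<subseteq> set ds"
  shows "ch2_eq (u @ ds) ds"
  using assms(2)
proof (induction u)
  case Nil
  then show ?case by (simp add: ch2_eq.refl)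
next
  case (Cons a u)
  have "ch2_eq (u @ ds) ds"
    using Cons by simp
  then have "ch2_eq (a # u @ ds) (a # ds)"
    by (rule ch2_eq_contextI[where u = "[a]" and v = "[]"]) simp_all
  also have "ch2_eq \<dots> ds"
    using assms(1) Cons.prems by (simp add: ch2_eq_decreasing_absorbs_letter_left)
  finally show ?case by simp
qed

lemma ch2_eq_decreasing_absorbs_right:
  assumes "sorted_wrt (>) ds" and "set v \<subseteq> set ds"
  shows "ch2_eq (ds @ v) ds"
  using assms(2)
proof (induction v rule: rev_induct)
  case Nil
  then show ?case by (simp add: ch2_eq.refl)
next
  case (snoc a v)
  have "ch2_eq (ds @ v) ds"
    using snoc by simp
  then have "ch2_eq (ds @ v @ [a]) (ds @ [a])"
    by (rule ch2_eq_contextI[where u = "[]" and v = "[a]"]) simp_all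
  also have "ch2_eq \<dots> ds"
    using assms(1) snoc.prems by (simp add: ch2_eq_decreasing_absorbs_letter_right)
  finally show ?case by simp
qed

lemma ex_decreasing_enumeration:
  fixes A :: "'a::linorder set"
  shows "finite A \<Longrightarrow> \<exists>ds. sorted_wrt (>) ds \<and> set ds = A"
  by (intro exI[of _ "rev (sorted_list_of_set A)"]) (simp add: sorted_wrt_rev)

lemma ch2_eq_power_eventually_decreasing:
  assumes "sorted_wrt (>) ds" and "set ds = set w"
  shows "\<forall>\<^sub>F n in sequentially. ch2_eq (concat (replicate n w)) ds"
  using assms
proof (induction ds arbitrary: w)
  case Nil
  then show ?case by (simp add: ch2_eq.refl)
next
  case (Cons m ds)
  have lt: "\<forall>c\<in>set ds. c < m" and sorted: "sorted_wrt (>) ds"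
    using Cons.prems(1) by auto
  have le: "\<forall>c\<in>set w. c \<le> m"
    using Cons.prems(2)[symmetric] lt by auto
  obtain s t where w: "w = s @ m # t" and m_s: "m \<notin> set s"
    using Cons.prems(2) by (metis list.set_intros(1) split_list_first)
  define t' where "t' = filter (\<lambda>c. c \<noteq> m) t"
  define w' where "w' = s @ t'"
  have filter_w: "filter (\<lambda>c. c \<noteq> m) w = w'"
    using m_s unfolding w w'_def t'_def by (auto simp: filter_id_conv)
  have set_w': "set ds = set w'"
    using Cons.prems(2) lt filter_w[symmetric] by auto
  have "ch2_eq (concat (replicate (Suc k) w)) (m # ds)"
    if IH: "ch2_eq (concat (replicate k w')) ds" for k
  proof -
    have "\<forall>c\<in>set (t @ concat (replicate k w)). c \<le> m"
      using le w by auto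
    moreover have "filter (\<lambda>c. c \<noteq> m) (t @ concat (replicate k w)) = t' @ concat (replicate k w')"
      unfolding t'_def by (simp add: filter_concat filter_w[symmetric] map_replicate)
    ultimately have erase: "ch2_eq (m # t @ concat (replicate k w)) (m # t' @ concat (replicate k w'))"
      using ch2_eq_max_letter_erases_later_copies by metis
    have t'_ds: "set t' \<subseteq> set ds" and s_ds: "set s \<subseteq> set (m # ds)"
      using set_w' Cons.prems(2) unfolding w w'_def by auto
    have "ch2_eq (concat (replicate (Suc k) w)) (s @ (m # t' @ concat (replicate k w')) @ [])"
      by (rule ch2_eq_contextI[OF erase, where u = s and v = "[]"]) (simp_all add: w)
    also have "ch2_eq \<dots> ((s @ m # t') @ ds @ [])"
      by (rule ch2_eq_contextI[OF IH, where u = "s @ m # t'" and v = "[]"]) simp_all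
    also have "ch2_eq \<dots> ((s @ [m]) @ ds @ [])"
      by (rule ch2_eq_contextI[OF ch2_eq_decreasing_absorbs_left[OF sorted t'_ds],
            where u = "s @ [m]" and v = "[]"]) simp_all
    also have "ch2_eq \<dots> (m # ds)"
      using ch2_eq_decreasing_absorbs_left[OF Cons.prems(1) s_ds] by simp
    finally show ?thesis .
  qed
  then have "\<forall>\<^sub>F k in sequentially. ch2_eq (concat (replicate (Suc k) w)) (m # ds)"
    using Cons.IH[OF sorted set_w'] by (rule eventually_mono[rotated])
  then show ?case by (rule eventually_sequentially_Suc[THEN iffD1])
qed

lemma ch2_eq_iterate_context:
  assumes "ch2_eq x (p @ x @ q)"
  shows "ch2_eq x (concat (replicate n p) @ x @ concat (replicate n q))"
proof (induction n)
  case 0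
  then show ?case by (simp add: ch2_eq.refl)
next
  case (Suc n)
  have "ch2_eq (p @ x @ q) (p @ (concat (replicate n p) @ x @ concat (replicate n q)) @ q)"
    using Suc by (rule ch2_eq_context)
  moreover have "concat (replicate n q) @ q = q @ concat (replicate n q)"
    using arg_cong[OF replicate_append_same[of n q], of concat] by simp
  ultimately show ?case
    using ch2_eq.trans[OF assms] by simp
qed

lemma ch2_eq_decreasing_context:
  assumes "ch2_eq x (p @ x @ q)"
    and "sorted_wrt (>) dp" "set dp = set p"
    and "sorted_wrt (>) dq" "set dq = set q"
  shows "ch2_eq x (dp @ x @ dq)"
proof -
  obtain n where p: "ch2_eq (concat (replicate n p)) dp"
    and q: "ch2_eq (concat (replicate n q)) dq"
    using eventually_happens'[OF sequentially_bot eventually_conj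
        [OF ch2_eq_power_eventually_decreasing[OF assms(2,3)]
            ch2_eq_power_eventually_decreasing[OF assms(4,5)]]]
    by blast
  have "ch2_eq x (concat (replicate n p) @ x @ concat (replicate n q))"
    using assms(1) by (rule ch2_eq_iterate_context)
  also have "ch2_eq \<dots> (dp @ x @ concat (replicate n q))"
    using p by (rule ch2_eq_contextI[where u = "[]"]) simp_all
  also have "ch2_eq \<dots> (dp @ x @ dq)"
    using q by (rule ch2_eq_contextI[where u = "dp @ x" and v = "[]"]) simp_all
  finally show ?thesis .
qed

theorem mainTheorem3:
  fixes x y :: "'a::{linorder,finite} list"
  assumes "ch2_J_equiv x y"
  shows "ch2_eq x y"
proof -
  obtain u v u' v' where xy: "ch2_eq x (u @ y @ v)" and yx: "ch2_eq y (u' @ x @ v')"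
    using assms unfolding ch2_J_equiv_def by blast
  have "ch2_eq x ((u @ u') @ x @ (v' @ v))"
    using ch2_eq.trans[OF xy ch2_eq_context[OF yx]] by simp
  moreover obtain dp dq where dp: "sorted_wrt (>) dp" "set dp = set (u @ u')"
    and dq: "sorted_wrt (>) dq" "set dq = set (v' @ v)"
    using ex_decreasing_enumeration by (metis finite_set)
  ultimately have x: "ch2_eq x (dp @ x @ dq)"
    by (rule ch2_eq_decreasing_context)
  have u'_dp: "set u' \<subseteq> set dp" and v'_dq: "set v' \<subseteq> set dq"
    using dp(2) dq(2) by auto
  have "ch2_eq y (u' @ (dp @ x @ dq) @ v')"
    using ch2_eq.trans[OF yx ch2_eq_context[OF x]] .
  also have "ch2_eq \<dots> (dp @ x @ dq @ v')"
    using ch2_eq_context[OF ch2_eq_decreasing_absorbs_left[OF dp(1) u'_dp], of "[]" "x @ dq @ v'"]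
    by simp
  also have "ch2_eq \<dots> (dp @ x @ dq)"
    using ch2_eq_context[OF ch2_eq_decreasing_absorbs_right[OF dq(1) v'_dq], of "dp @ x" "[]"]
    by simp
  also have "ch2_eq \<dots> x"
    using x by (rule ch2_eq.sym)
  finally show ?thesis by (rule ch2_eq.sym)
qed

end
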